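(* Suppose $B\subseteq\mathcal{SC}\times\mathcal{SC}$ is reflexive. For every $\rho\in\mathcal{SC}$, either $\rho\xrightarrow{\checkmark}$ or $\rho\|\overline{\rho}\xrightarrow{\tau}_B$ (the composition $\rho\|\overline\rho$ has a $\tau$-move).
   Context: Fix base types $BT$ with preorder $\leq_{\mathsf b}$ and labels $\mathcal L$. Contract terms: $\sigma::=\mathbf 1\mid ?\mathtt t.\sigma\mid !\mathtt t.\sigma\mid !(\sigma).\sigma\mid ?(\sigma).\sigma\mid \sum_{i\in I}?l_i.\sigma_i\mid \bigoplus_{i\in I}!l_i.\sigma_i\mid \mu x.\sigma\mid x$ ($I$ finite nonempty, labels distinct). $\mathcal{SC}$ = closed guarded terms. LTS: $\mathbf 1\xrightarrow\checkmark$; $\lambda.\sigma\xrightarrow\lambda\sigma$ for prefixes (including $!l.\sigma$); $\bigoplus_{i\in I}!l_i.\sigma_i\xrightarrow\tau!l_i.\sigma_i$ for $|I|>1$; $\sum ?l_i.\sigma_i\xrightarrow{?l_i}\sigma_i$; $\mu x.\sigma\xrightarrow\tau\sigma[\mu x.\sigma/x]$. $\lambda_1\bowtie_B\lambda_2$ iff the pair is $(!l,?l)$, $(?l,!l)$, $(!\mathtt t_1,?\mathtt t_2)$ with $\mathtt t_1\leq_{\mathsf b}\mathtt t_2$, $(?\mathtt t_1,!\mathtt t_2)$ with $\mathtt t_2\leq_{\mathsf b}\mathtt t_1$, $(!(\sigma_1),?(\sigma_2))$ with $\sigma_1B\sigma_2$, $(?(\sigma_1),!(\sigma_2))$ with $\sigma_2B\sigma_1$.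 $\rho\|\sigma\xrightarrow\tau_B$ by a $\tau$ of either side, or by $\rho\xrightarrow{\lambda_1}$, $\sigma\xrightarrow{\lambda_2}$ with $\lambda_1\bowtie_B\lambda_2$. Standard dual (messages unchanged): $\overline{\mathbf 1}=\mathbf 1$, $\overline x=x$, $\overline{\mu x.\sigma}=\mu x.\overline\sigma$, $\overline{?\mathtt t.\sigma}=!\mathtt t.\overline\sigma$, $\overline{!\mathtt t.\sigma}=?\mathtt t.\overline\sigma$, $\overline{?(\sigma^m).\sigma}=!(\sigma^m).\overline\sigma$, $\overline{!(\sigma^m).\sigma}=?(\sigma^m).\overline\sigma$, $\overline{\sum_i ?l_i.\sigma_i}=\bigoplus_i !l_i.\overline{\sigma_i}$, $\overline{\bigoplus_i !l_i.\sigma_i}=\sum_i ?l_i.\overline{\sigma_i}$. *)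

theory Defs
  imports Main
begin

(* Base types: type 'b (with preorder \<le> playing the role of \<le>_b);
   labels: type 'l; recursion variables: nat.
   Finite nonempty index families with distinct labels are represented by lists of
   (label, continuation) pairs, constrained by the well-formedness predicate wf. *)
datatype ('b, 'l) contract =
    One
  | InB 'b "('b, 'l) contract"
  | OutB 'b "('b, 'l) contract"
  | OutS "('b, 'l) contract" "('b, 'l) contract"
  | InS "('b, 'l) contract" "('b, 'l) contract"
  | Ext "('l \<times> ('b, 'l) contract) list"
  | IntC "('l \<times> ('b, 'l) contract) list"
  | Mu nat "('b, 'l) contract"
  | Var nat

fun wf :: "('b, 'l) contract \<Rightarrow> bool" where
  "wf One = True"
| "wf (InB t s) = wf s"
| "wf (OutB t s) = wf s"
| "wf (OutS m s) = (wf m \<and> wf s)"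
| "wf (InS m s) = (wf m \<and> wf s)"
| "wf (Ext bs) = (bs \<noteq> [] \<and> distinct (map fst bs) \<and> (\<forall>p\<in>set bs. wf (snd p)))"
| "wf (IntC bs) = (bs \<noteq> [] \<and> distinct (map fst bs) \<and> (\<forall>p\<in>set bs. wf (snd p)))"
| "wf (Mu x s) = wf s"
| "wf (Var x) = True"

fun fv :: "('b, 'l) contract \<Rightarrow> nat set" where
  "fv One = {}"
| "fv (InB t s) = fv s"
| "fv (OutB t s) = fv s"
| "fv (OutS m s) = fv m \<union> fv s"
| "fv (InS m s) = fv m \<union> fv s"
| "fv (Ext bs) = (\<Union>p\<in>set bs. fv (snd p))"
| "fv (IntC bs) = (\<Union>p\<in>set bs. fv (snd p))"
| "fv (Mu x s) = fv s - {x}"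
| "fv (Var x) = {x}"

fun ufv :: "('b, 'l) contract \<Rightarrow> nat set" where
  "ufv (Var x) = {x}"
| "ufv (Mu x s) = ufv s - {x}"
| "ufv _ = {}"

fun guarded :: "('b, 'l) contract \<Rightarrow> bool" where
  "guarded One = True"
| "guarded (InB t s) = guarded s"
| "guarded (OutB t s) = guarded s"
| "guarded (OutS m s) = (guarded m \<and> guarded s)"
| "guarded (InS m s) = (guarded m \<and> guarded s)"
| "guarded (Ext bs) = (\<forall>p\<in>set bs. guarded (snd p))"
| "guarded (IntC bs) = (\<forall>p\<in>set bs. guarded (snd p))"
| "guarded (Mu x s) = (x \<notin> ufv s \<and> guarded s)"
| "guarded (Var x) = True"

definition SC :: "('b, 'l) contract set" where
  "SC = {\<sigma>. wf \<sigma> \<and> fv \<sigma> = {} \<and> guarded \<sigma>}"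

(* substitution subst x t s = s[t/x] (used only with closed t, so no capture) *)
fun subst :: "nat \<Rightarrow> ('b, 'l) contract \<Rightarrow> ('b, 'l) contract \<Rightarrow> ('b, 'l) contract" where
  "subst x t One = One"
| "subst x t (InB b s) = InB b (subst x t s)"
| "subst x t (OutB b s) = OutB b (subst x t s)"
| "subst x t (OutS m s) = OutS (subst x t m) (subst x t s)"
| "subst x t (InS m s) = InS (subst x t m) (subst x t s)"
| "subst x t (Ext bs) = Ext (map (\<lambda>p. (fst p, subst x t (snd p))) bs)"
| "subst x t (IntC bs) = IntC (map (\<lambda>p. (fst p, subst x t (snd p))) bs)"
| "subst x t (Mu y s) = (if x = y then Mu y s else Mu y (subst x t s))"
| "subst x t (Var y) = (if x = y then t else Var y)"

datatype ('b, 'l) act =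
    Tick | Tau
  | InBA 'b | OutBA 'b
  | InSA "('b, 'l) contract" | OutSA "('b, 'l) contract"
  | InL 'l | OutL 'l

(* LTS; the \<checkmark>-transition of 1 is given target 1 (its target is irrelevant) *)
inductive step :: "('b, 'l) contract \<Rightarrow> ('b, 'l) act \<Rightarrow> ('b, 'l) contract \<Rightarrow> bool" where
  st_tick: "step One Tick One"
| st_inB: "step (InB t s) (InBA t) s"
| st_outB: "step (OutB t s) (OutBA t) s"
| st_outS: "step (OutS m s) (OutSA m) s"
| st_inS: "step (InS m s) (InSA m) s"
| st_outL: "step (IntC [(l, s)]) (OutL l) s"
| st_int: "length bs > 1 \<Longrightarrow> (l, s) \<in> set bs \<Longrightarrow> step (IntC bs) Tau (IntC [(l, s)])"
| st_ext: "(l, s) \<in> set bs \<Longrightarrow> step (Ext bs) (InL l) s"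
| st_mu: "step (Mu x s) Tau (subst x (Mu x s) s)"

fun compat :: "(('b::preorder, 'l) contract \<times> ('b, 'l) contract) set
                 \<Rightarrow> ('b, 'l) act \<Rightarrow> ('b, 'l) act \<Rightarrow> bool" where
  "compat B (OutL l1) (InL l2) = (l1 = l2)"
| "compat B (InL l1) (OutL l2) = (l1 = l2)"
| "compat B (OutBA t1) (InBA t2) = (t1 \<le> t2)"
| "compat B (InBA t1) (OutBA t2) = (t2 \<le> t1)"
| "compat B (OutSA s1) (InSA s2) = ((s1, s2) \<in> B)"
| "compat B (InSA s1) (OutSA s2) = ((s2, s1) \<in> B)"
| "compat B _ _ = False"

definition par_tau :: "(('b::preorder, 'l) contract \<times> ('b, 'l) contract) set
                 \<Rightarrow> ('b, 'l) contract \<Rightarrow> ('b, 'l) contract \<Rightarrow> bool" where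
  "par_tau B \<rho> \<sigma> \<longleftrightarrow>
     (\<exists>\<rho>'. step \<rho> Tau \<rho>') \<or> (\<exists>\<sigma>'. step \<sigma> Tau \<sigma>') \<or>
     (\<exists>a1 a2 \<rho>' \<sigma>'. step \<rho> a1 \<rho>' \<and> step \<sigma> a2 \<sigma>' \<and> compat B a1 a2)"

fun dual :: "('b, 'l) contract \<Rightarrow> ('b, 'l) contract" where
  "dual One = One"
| "dual (Var x) = Var x"
| "dual (Mu x s) = Mu x (dual s)"
| "dual (InB t s) = OutB t (dual s)"
| "dual (OutB t s) = InB t (dual s)"
| "dual (InS m s) = OutS m (dual s)"
| "dual (OutS m s) = InS m (dual s)"
| "dual (Ext bs) = IntC (map (\<lambda>p. (fst p, dual (snd p))) bs)"
| "dual (IntC bs) = Ext (map (\<lambda>p. (fst p, dual (snd p))) bs)"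

end

theory Submission
  imports Defs
begin

text \<open>A term other than \<open>\<one>\<close> either moves silently on its own (unfolding a recursion, or an
  internal choice among several branches, possibly on the dual side) or starts with a single
  prefix that the dual mirrors. Since the dual copies messages unchanged, an exchanged session is
  compatible with itself precisely because \<open>B\<close> is reflexive on \<open>SC\<close>.\<close>

lemma par_tau_left_tauI: "step \<rho> Tau \<rho>' \<Longrightarrow> par_tau B \<rho> \<sigma>"
  unfolding par_tau_def by blast

lemma par_tau_right_tauI: "step \<sigma> Tau \<sigma>' \<Longrightarrow> par_tau B \<rho> \<sigma>"
  unfolding par_tau_def by blast

lemma par_tau_syncI:
  "step \<rho> a1 \<rho>' \<Longrightarrow> step \<sigma> a2 \<sigma>' \<Longrightarrow> compat B a1 a2 \<Longrightarrow> par_tau B \<rho> \<sigma>"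
  unfolding par_tau_def by blast

lemma IntC_tau_or_singleton:
  assumes "bs \<noteq> []"
  shows "(\<exists>\<rho>'. step (IntC bs) Tau \<rho>') \<or> (\<exists>l s. bs = [(l, s)])"
proof (cases "length bs > 1")
  case True
  obtain l s where "(l, s) \<in> set bs"
    using assms by (metis list.set_intros(1) neq_Nil_conv surj_pair)
  with True show ?thesis by (blast intro: st_int)
next
  case False
  with assms obtain p where "bs = [p]"
    by (cases bs) auto
  then show ?thesis by (cases p) auto
qed

lemma par_tau_dual:
  fixes B :: "(('b::preorder, 'l) contract \<times> ('b, 'l) contract) set"
  assumes "wf \<rho>"
    and "\<And>x. \<rho> \<noteq> Var x"
    and "\<And>m s. \<rho> = OutS m s \<or> \<rho> = InS m s \<Longrightarrow> (m, m) \<in> B"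
  shows "\<rho> = One \<or> par_tau B \<rho> (dual \<rho>)"
proof (cases \<rho>)
  case (InB t s)
  have "par_tau B (InB t s) (OutB t (dual s))"
    by (rule par_tau_syncI[OF st_inB st_outB]) simp
  then show ?thesis using InB by simp
next
  case (OutB t s)
  have "par_tau B (OutB t s) (InB t (dual s))"
    by (rule par_tau_syncI[OF st_outB st_inB]) simp
  then show ?thesis using OutB by simp
next
  case (OutS m s)
  have "par_tau B (OutS m s) (InS m (dual s))"
    by (rule par_tau_syncI[OF st_outS st_inS]) (simp add: OutS assms(3))
  then show ?thesis using OutS by simp
next
  case (InS m s)
  have "par_tau B (InS m s) (OutS m (dual s))"
    by (rule par_tau_syncI[OF st_inS st_outS]) (simp add: InS assms(3))
  then show ?thesis using InS by simp
next
  case (Ext bs)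
  let ?dbs = "map (\<lambda>p. (fst p, dual (snd p))) bs"
  have "?dbs \<noteq> []" using assms(1) Ext by simp
  from IntC_tau_or_singleton[OF this] show ?thesis
  proof (elim disjE exE)
    fix \<sigma>' assume "step (IntC ?dbs) Tau \<sigma>'"
    then show ?thesis using Ext par_tau_right_tauI by (metis dual.simps(8))
  next
    fix l s' assume "?dbs = [(l, s')]"
    then obtain s where bs: "bs = [(l, s)]" and "s' = dual s"
      by (cases bs) auto
    have "par_tau B (Ext [(l, s)]) (IntC [(l, dual s)])"
      by (rule par_tau_syncI[OF st_ext st_outL]) simp_all
    then show ?thesis using Ext bs by simp
  qed
next
  case (IntC bs)
  have "bs \<noteq> []" using assms(1) IntC by simp
  from IntC_tau_or_singleton[OF this] show ?thesis
  proof (elim disjE exE)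
    fix \<rho>' assume "step (IntC bs) Tau \<rho>'"
    then show ?thesis using IntC par_tau_left_tauI by blast
  next
    fix l s assume bs: "bs = [(l, s)]"
    have "par_tau B (IntC [(l, s)]) (Ext [(l, dual s)])"
      by (rule par_tau_syncI[OF st_outL st_ext]) simp_all
    then show ?thesis using IntC bs by simp
  qed
next
  case (Mu x s)
  then show ?thesis using par_tau_left_tauI[OF st_mu] by blast
qed (use assms(2) in auto)

theorem mainTheorem17:
  fixes B :: "(('b::preorder, 'l) contract \<times> ('b, 'l) contract) set"
    and \<rho> :: "('b, 'l) contract"
  assumes "B \<subseteq> SC \<times> SC"
    and "refl_on SC B"
    and "\<rho> \<in> SC"
  shows "(\<exists>\<rho>'. step \<rho> Tick \<rho>') \<or> par_tau B \<rho> (dual \<rho>)"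
proof -
  have "\<rho> = One \<or> par_tau B \<rho> (dual \<rho>)"
  proof (rule par_tau_dual)
    show "wf \<rho>" and "\<And>x. \<rho> \<noteq> Var x"
      using assms(3) by (auto simp: SC_def)
    show "(m, m) \<in> B" if "\<rho> = OutS m s \<or> \<rho> = InS m s" for m s
    proof -
      have "m \<in> SC" using assms(3) that by (auto simp: SC_def)
      then show ?thesis using assms(2) by (simp add: refl_on_def)
    qed
  qed
  then show ?thesis using st_tick by blast
qed

end
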